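(* Let $G$ be a finite graph, let $L=\{L_v\subset \mathbb{R}:v\in V(G)\}$ be an assignment of finite lists of real numbers to the vertices of $G$, and suppose that $f:V(G)\to \mathbb{Z}$ satisfies $f(v)<|L_v|$ for every $v\in V(G)$ and $\sum_{v\in V(G)} f(v)=|E(G)|-1$. If $G$ is not $L$-colorable, then for every color $c\in\mathbb{R}$, $$\sum_{z\in V(G)} [x^{f+1_z}]\,P_G\cdot \chi_{L,c}(z) = 0.$$
   Context: An $L$-coloring of $G$ is a function $\varphi\in\prod_{v\in V(G)}L_v$ (i.e. $\varphi(v)\in L_v$ for all $v$) with $\varphi(u)\neq\varphi(v)$ for every edge $uv\in E(G)$; $G$ is $L$-colorable if an $L$-coloring exists. The graph polynomial $P_G$ is the polynomial in variables $x_v$ ($v\in V(G)$) defined by fixing an orientation $\vec G$ of $G$ and setting $P_G=\prod_{(u,v)\in E(\vec G)}(x_v-x_u)$; it is determined up to sign by $G$. For a function $g:V(G)\to\mathbb{Z}$ with nonnegative values, $x^g=\prod_{v\in V(G)}x_v^{g(v)}$, and $[x^g]\,q$ denotes the coefficient of the monomial $x^g$ in a polynomial $q$ (taken to be $0$ if $g$ has a negative value). For $z\in V(G)$, $1_z:V(G)\to\{0,1\}$ is the function with $1_z(z)=1$ and $1_z(u)=0$ for $u\neq z$. For a color $c$, the characteristic vector $\chi_{L,c}:V(G)\to\{0,1\}$ is defined by $\chi_{L,c}(v)=1$ if $c\in L_v$ and $\chi_{L,c}(v)=0$ otherwise. *)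

theory Defs
  imports Complex_Main "HOL-Library.Poly_Mapping"
begin

text \<open>Multivariate polynomials in variables indexed by v with integer coefficients:
  monomials are finitely supported exponent maps.\<close>
type_synonym 'v mpoly = "('v \<Rightarrow>\<^sub>0 nat) \<Rightarrow>\<^sub>0 int"

definition Var :: "'v \<Rightarrow> 'v mpoly" where
  "Var v = Poly_Mapping.single (Poly_Mapping.single v 1) 1"

definition simple_graph :: "'v set \<Rightarrow> 'v set set \<Rightarrow> bool" where
  "simple_graph V E \<longleftrightarrow> finite V \<and> (\<forall>e\<in>E. e \<subseteq> V \<and> card e = 2)"

definition orientation :: "'v set set \<Rightarrow> ('v \<times> 'v) set \<Rightarrow> bool" where
  "orientation E D \<longleftrightarrow> (\<forall>(u,v)\<in>D. {u,v} \<in> E) \<and>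
     (\<forall>e\<in>E. \<exists>!p. p \<in> D \<and> {fst p, snd p} = e)"

definition graph_poly :: "('v \<times> 'v) set \<Rightarrow> 'v mpoly" where
  "graph_poly D = (\<Prod>(u,v)\<in>D. Var v - Var u)"

definition coeff_mono :: "'v set \<Rightarrow> ('v \<Rightarrow> int) \<Rightarrow> 'v mpoly \<Rightarrow> int" where
  "coeff_mono V g q =
     (if \<forall>v\<in>V. 0 \<le> g v
      then Poly_Mapping.lookup q (\<Sum>v\<in>V. Poly_Mapping.single v (nat (g v)))
      else 0)"

definition indic1 :: "'v \<Rightarrow> 'v \<Rightarrow> int" where
  "indic1 z u = (if u = z then 1 else 0)"

definition chi :: "('v \<Rightarrow> 'c set) \<Rightarrow> 'c \<Rightarrow> 'v \<Rightarrow> int" where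
  "chi L c v = (if c \<in> L v then 1 else 0)"

definition L_colorable :: "'v set \<Rightarrow> 'v set set \<Rightarrow> ('v \<Rightarrow> 'c set) \<Rightarrow> bool" where
  "L_colorable V E L \<longleftrightarrow> (\<exists>\<phi>. (\<forall>v\<in>V. \<phi> v \<in> L v) \<and>
      (\<forall>u v. {u,v} \<in> E \<longrightarrow> \<phi> u \<noteq> \<phi> v))"

end

(* For sets A v of sizes t v + 1, the linear functional on monomials
     x^m  |->  prod_v sum_(a in A v) a^(m v) / prod_(b in A v - {a}) (a - b)
   sends a polynomial P to a weighted sum of its values on the grid Pi_v A v, so it
   annihilates the graph polynomial as soon as no grid point is a proper colouring.
   Evaluated on the monomials of degree |E| = sum_v t v + 1 it vanishes except at
   x^(t + 1_z), where it equals sum (A z).  Hence sum_z [x^(t + 1_z)] P_G * sum (A z) = 0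
   for every choice of A v <= L v.  Choose A v containing c exactly when L v does, and
   compare with the sets obtained by renaming c to a colour c' outside all lists: the
   renamed grid still has no proper colouring, and sum (A z) grows by (c' - c) chi c z.
   This proves the claim for f >= 0.  If f takes a negative value, the only coefficients
   that can survive are [x^g] P_G with g < |L| and sum g = |E|, and these vanish by the
   same argument in degree |E| (the Alon-Tarsi form of the Combinatorial Nullstellensatz). *)

theory Submission
  imports Defs "HOL-Library.FuncSet" "HOL-Combinatorics.Transposition"
begin

section \<open>Divided differences of powers\<close>

text \<open>The divided difference of x^k at the nodes A, that is, the complete homogeneous
  symmetric polynomial of degree k + 1 - card A in the elements of A.\<close>
definition divdiff_power :: "'a::field set \<Rightarrow> nat \<Rightarrow> 'a" where
  "divdiff_power A k = (\<Sum>a\<in>A. a ^ k / (\<Prod>b\<in>A - {a}. a - b))"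

lemma divdiff_power_Suc:
  assumes "finite A" "c \<in> A"
  shows "divdiff_power A (Suc k) = c * divdiff_power A k + divdiff_power (A - {c}) k"
proof -
  have "divdiff_power A (Suc k) - c * divdiff_power A k
      = (\<Sum>a\<in>A. a ^ k * (a - c) / (\<Prod>b\<in>A - {a}. a - b))"
    unfolding divdiff_power_def sum_distrib_left sum_subtractf[symmetric]
    by (rule sum.cong) (auto simp: algebra_simps diff_divide_distrib)
  also have "\<dots> = (\<Sum>a\<in>A - {c}. a ^ k * (a - c) / (\<Prod>b\<in>A - {a}. a - b))"
    using assms by (subst sum.remove[of A c]) auto
  also have "\<dots> = divdiff_power (A - {c}) k"
    unfolding divdiff_power_def
  proof (rule sum.cong)
    fix a assume a: "a \<in> A - {c}"
    have "(\<Prod>b\<in>A - {a}. a - b) = (a - c) * (\<Prod>b\<in>A - {c} - {a}. a - b)"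
      using assms a by (subst prod.remove[of "A - {a}" c]) (auto intro: prod.cong)
    then show "a ^ k * (a - c) / (\<Prod>b\<in>A - {a}. a - b) = a ^ k / (\<Prod>b\<in>A - {c} - {a}. a - b)"
      using a by simp
  qed simp
  finally show ?thesis
    by (simp add: algebra_simps)
qed

lemma divdiff_power_values:
  assumes "card A = Suc n"
  shows "(\<forall>k<n. divdiff_power A k = 0) \<and> divdiff_power A n = 1 \<and> divdiff_power A (Suc n) = \<Sum>A"
  using assms
proof (induction n arbitrary: A)
  case 0
  then obtain a where "A = {a}"
    by (metis One_nat_def card_1_singletonE)
  then show ?case by (simp add: divdiff_power_def)
next
  case (Suc n)
  then obtain c B where B: "A = insert c B" "c \<notin> B" "card B = Suc n"
    by (meson card_Suc_eq)
  then obtain d where "d \<in> B"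
    by fastforce
  then have A: "finite A" and cd: "c \<in> A" "d \<in> A" "c \<noteq> d"
    using B card.infinite by fastforce+
  have "card (A - {c}) = Suc n" "card (A - {d}) = Suc n"
    using Suc.prems cd by auto
  note IHc = Suc.IH[OF this(1)] and IHd = Suc.IH[OF this(2)]
  have cd_ne: "c - d \<noteq> 0"
    using cd(3) by simp
  have diff: "(c - d) * divdiff_power A k = divdiff_power (A - {d}) k - divdiff_power (A - {c}) k" for k
    using divdiff_power_Suc[OF A cd(1), of k] divdiff_power_Suc[OF A cd(2), of k]
    by (simp add: algebra_simps)
  have "divdiff_power (A - {d}) k = divdiff_power (A - {c}) k" if "k \<le> n" for k
    using IHc IHd that by (cases "k = n") simp_all
  then have low: "divdiff_power A k = 0" if "k \<le> n" for k
    using diff[of k] cd_ne that by simp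
  have "\<Sum>(A - {d}) - \<Sum>(A - {c}) = c - d"
    using A cd by (simp add: sum_diff1)
  then have "(c - d) * divdiff_power A (Suc n) = (c - d) * 1"
    using diff[of "Suc n"] IHc IHd by simp
  then have mid: "divdiff_power A (Suc n) = 1"
    using cd_ne by (simp only: mult_cancel_left) simp
  have "divdiff_power A (Suc (Suc n)) = c + \<Sum>(A - {c})"
    using divdiff_power_Suc[OF A cd(1), of "Suc n"] mid IHc by simp
  also have "\<dots> = \<Sum>A"
    using A cd(1) by (simp add: sum.remove)
  finally show ?case
    using low mid by auto
qed

lemma divdiff_power_below: "card A = Suc n \<Longrightarrow> k < n \<Longrightarrow> divdiff_power A k = 0"
  using divdiff_power_values by blast

lemma divdiff_power_degree: "card A = Suc n \<Longrightarrow> divdiff_power A n = 1"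
  using divdiff_power_values by blast

lemma divdiff_power_Suc_degree: "card A = Suc n \<Longrightarrow> divdiff_power A (Suc n) = \<Sum>A"
  using divdiff_power_values by blast

section \<open>Expansion of the graph polynomial\<close>

definition arc_exponent :: "('v \<times> 'v) set \<Rightarrow> ('v \<times> 'v) set \<Rightarrow> 'v \<Rightarrow>\<^sub>0 nat" where
  "arc_exponent D S =
     (\<Sum>p\<in>S. Poly_Mapping.single (snd p) 1) + (\<Sum>p\<in>D - S. Poly_Mapping.single (fst p) 1)"

lemma prod_arcs_expand:
  fixes x :: "('v \<Rightarrow>\<^sub>0 nat) \<Rightarrow> 'b::comm_ring_1"
  assumes D: "finite D"
    and x_add: "\<And>m n. x (m + n) = x m * x n" and x_zero: "x 0 = 1"
  shows "(\<Prod>p\<in>D. x (Poly_Mapping.single (snd p) 1) - x (Poly_Mapping.single (fst p) 1))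
       = (\<Sum>S\<in>Pow D. (-1) ^ card (D - S) * x (arc_exponent D S))"
proof -
  have x_sum: "x (\<Sum>p\<in>S. h p) = (\<Prod>p\<in>S. x (h p))" if "finite S" for h and S :: "('v \<times> 'v) set"
    using that by (induction S rule: finite_induct) (simp_all add: x_zero x_add)
  have "(\<Prod>p\<in>D. x (Poly_Mapping.single (snd p) 1) - x (Poly_Mapping.single (fst p) 1))
      = (\<Prod>p\<in>D. x (Poly_Mapping.single (snd p) 1) + - x (Poly_Mapping.single (fst p) 1))"
    by simp
  also have "\<dots> = (\<Sum>S\<in>Pow D. (\<Prod>p\<in>S. x (Poly_Mapping.single (snd p) 1))
                              * (\<Prod>p\<in>D - S. - x (Poly_Mapping.single (fst p) 1)))"
    by (rule prod_add[OF D])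
  also have "\<dots> = (\<Sum>S\<in>Pow D. (-1) ^ card (D - S) * x (arc_exponent D S))"
  proof (rule sum.cong[OF refl])
    fix S assume "S \<in> Pow D"
    then have "finite S" "finite (D - S)"
      using D finite_subset by auto
    then show "(\<Prod>p\<in>S. x (Poly_Mapping.single (snd p) 1)) * (\<Prod>p\<in>D - S. - x (Poly_Mapping.single (fst p) 1))
        = (-1) ^ card (D - S) * x (arc_exponent D S)"
      unfolding arc_exponent_def x_add
      by (simp add: x_sum prod_uminus mult_ac)
  qed
  finally show ?thesis .
qed

lemma power_minus_one_mult_single:
  "(-1) ^ k * Poly_Mapping.single m (1::'b::comm_ring_1) = Poly_Mapping.single m ((-1) ^ k)"
  by (induction k) (simp_all add: single_uminus)

lemma graph_poly_expand:
  assumes "finite D"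
  shows "graph_poly D = (\<Sum>S\<in>Pow D. Poly_Mapping.single (arc_exponent D S) ((-1) ^ card (D - S)))"
proof -
  have "graph_poly D = (\<Prod>p\<in>D. Var (snd p) - Var (fst p))"
    unfolding graph_poly_def by (rule prod.cong) auto
  also have "\<dots> = (\<Sum>S\<in>Pow D. (-1) ^ card (D - S) * Poly_Mapping.single (arc_exponent D S) 1)"
    unfolding Var_def by (rule prod_arcs_expand[OF assms]) (simp_all add: mult_single)
  also have "\<dots> = (\<Sum>S\<in>Pow D. Poly_Mapping.single (arc_exponent D S) ((-1) ^ card (D - S)))"
    by (simp add: power_minus_one_mult_single)
  finally show ?thesis .
qed

lemma lookup_graph_poly:
  assumes "finite D"
  shows "Poly_Mapping.lookup (graph_poly D) m
       = (\<Sum>S\<in>Pow D. if arc_exponent D S = m then (-1) ^ card (D - S) else 0)"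
  unfolding graph_poly_expand[OF assms] lookup_sum by (simp add: lookup_single when_def)

definition monomial_value :: "'v set \<Rightarrow> ('v \<Rightarrow> 'a::comm_semiring_1) \<Rightarrow> ('v \<Rightarrow>\<^sub>0 nat) \<Rightarrow> 'a" where
  "monomial_value V a m = (\<Prod>v\<in>V. a v ^ Poly_Mapping.lookup m v)"

lemma monomial_value_add: "monomial_value V a (m + n) = monomial_value V a m * monomial_value V a n"
  unfolding monomial_value_def lookup_add power_add prod.distrib ..

lemma monomial_value_zero: "monomial_value V a 0 = 1"
  unfolding monomial_value_def by simp

lemma monomial_value_single:
  assumes "finite V" "v \<in> V"
  shows "monomial_value V a (Poly_Mapping.single v 1) = a v"
proof -
  have "monomial_value V a (Poly_Mapping.single v 1) = (\<Prod>w\<in>V. if w = v then a v else 1)"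
    unfolding monomial_value_def by (rule prod.cong) (auto simp: lookup_single)
  then show ?thesis
    using assms by (simp add: prod.delta')
qed

section \<open>The grid functional\<close>

text \<open>Expanding the product of divided differences, the grid functional maps a polynomial
  to the sum of its values at the grid points a of Pi v A v, each weighted by the inverse of
  the product of the differences a v - b with b in A v - {a v}: it is the coefficient
  functional of the Combinatorial Nullstellensatz.\<close>
definition grid_functional :: "'v set \<Rightarrow> ('v \<Rightarrow> 'a::field set) \<Rightarrow> ('v \<Rightarrow>\<^sub>0 nat) \<Rightarrow> 'a" where
  "grid_functional V A m = (\<Prod>v\<in>V. divdiff_power (A v) (Poly_Mapping.lookup m v))"

lemma grid_functional_graph_poly_eq_0:
  fixes A :: "'v \<Rightarrow> 'a::field set"
  assumes V: "finite V" and D: "D \<subseteq> V \<times> V" and A: "\<forall>v\<in>V. finite (A v)"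
    and no_coloring: "\<forall>a\<in>PiE V A. \<exists>p\<in>D. a (fst p) = a (snd p)"
  shows "(\<Sum>S\<in>Pow D. (-1) ^ card (D - S) * grid_functional V A (arc_exponent D S)) = 0"
proof -
  define w where "w v x = 1 / (\<Prod>b\<in>A v - {x}. x - b)" for v x
  have fin_D: "finite D"
    using V D finite_subset by blast
  have arcs: "(\<Prod>p\<in>D. a (snd p) - a (fst p))
      = (\<Sum>S\<in>Pow D. (-1) ^ card (D - S) * monomial_value V a (arc_exponent D S))"
    for a :: "'v \<Rightarrow> 'a"
  proof -
    have "(\<Prod>p\<in>D. a (snd p) - a (fst p))
        = (\<Prod>p\<in>D. monomial_value V a (Poly_Mapping.single (snd p) 1)
                  - monomial_value V a (Poly_Mapping.single (fst p) 1))"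
      using D V by (intro prod.cong refl) (auto simp: monomial_value_single simp del: One_nat_def)
    also have "\<dots> = (\<Sum>S\<in>Pow D. (-1) ^ card (D - S) * monomial_value V a (arc_exponent D S))"
      by (rule prod_arcs_expand[OF fin_D, where x = "monomial_value V a"])
        (simp_all add: monomial_value_add monomial_value_zero)
    finally show ?thesis .
  qed
  \<comment> \<open>No grid point is a proper colouring, so the graph polynomial vanishes on the grid.\<close>
  have "0 = (\<Sum>a\<in>PiE V A. (\<Prod>v\<in>V. w v (a v)) * (\<Prod>p\<in>D. a (snd p) - a (fst p)))"
  proof (rule sum.neutral[symmetric], rule ballI)
    fix a assume "a \<in> PiE V A"
    then obtain p where "p \<in> D" "a (fst p) = a (snd p)"
      using no_coloring by blast
    then show "(\<Prod>v\<in>V. w v (a v)) * (\<Prod>p\<in>D. a (snd p) - a (fst p)) = 0"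
      using fin_D by (force simp: prod_zero_iff)
  qed
  also have "\<dots> = (\<Sum>S\<in>Pow D. (-1) ^ card (D - S)
      * (\<Sum>a\<in>PiE V A. \<Prod>v\<in>V. w v (a v) * a v ^ Poly_Mapping.lookup (arc_exponent D S) v))"
    unfolding arcs sum_distrib_left monomial_value_def prod.distrib
    by (subst sum.swap) (simp add: mult_ac)
  also have "\<dots> = (\<Sum>S\<in>Pow D. (-1) ^ card (D - S)
      * (\<Prod>v\<in>V. \<Sum>x\<in>A v. w v x * x ^ Poly_Mapping.lookup (arc_exponent D S) v))"
  proof (rule sum.cong[OF refl])
    fix S
    show "(-1) ^ card (D - S)
        * (\<Sum>a\<in>PiE V A. \<Prod>v\<in>V. w v (a v) * a v ^ Poly_Mapping.lookup (arc_exponent D S) v)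
      = (-1) ^ card (D - S)
        * (\<Prod>v\<in>V. \<Sum>x\<in>A v. w v x * x ^ Poly_Mapping.lookup (arc_exponent D S) v)"
      using prod_sum_PiE[OF V, of A "\<lambda>v x. w v x * x ^ Poly_Mapping.lookup (arc_exponent D S) v"] A
      by simp
  qed
  also have "\<dots> = (\<Sum>S\<in>Pow D. (-1) ^ card (D - S) * grid_functional V A (arc_exponent D S))"
    unfolding grid_functional_def divdiff_power_def w_def by simp
  finally show ?thesis
    by simp
qed

definition exponent :: "'v set \<Rightarrow> ('v \<Rightarrow> nat) \<Rightarrow> 'v \<Rightarrow>\<^sub>0 nat" where
  "exponent V t = (\<Sum>v\<in>V. Poly_Mapping.single v (t v))"

lemma lookup_exponent:
  "finite V \<Longrightarrow> Poly_Mapping.lookup (exponent V t) x = (if x \<in> V then t x else 0)"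
  unfolding exponent_def lookup_sum lookup_single when_def by (simp add: sum.delta)

lemma coeff_mono_eq_lookup_exponent:
  "\<forall>v\<in>V. 0 \<le> g v \<Longrightarrow> coeff_mono V g q = Poly_Mapping.lookup q (exponent V (\<lambda>v. nat (g v)))"
  unfolding coeff_mono_def exponent_def by simp

lemma exponent_add_single:
  assumes "finite V" "z \<in> V"
  shows "exponent V (\<lambda>v. t v + (if v = z then 1 else 0)) = exponent V t + Poly_Mapping.single z 1"
  using assms by (intro poly_mapping_eqI) (auto simp: lookup_exponent lookup_add lookup_single when_def)

lemma exponent_eqI:
  assumes "finite V" "\<forall>x. x \<notin> V \<longrightarrow> Poly_Mapping.lookup m x = 0"
    and "\<forall>v\<in>V. Poly_Mapping.lookup m v = t v"
  shows "m = exponent V t"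
  using assms by (intro poly_mapping_eqI) (simp add: lookup_exponent)

lemma eq_exponent_of_ge:
  assumes V: "finite V" and supp: "\<forall>x. x \<notin> V \<longrightarrow> Poly_Mapping.lookup m x = 0"
    and ge: "\<forall>v\<in>V. t v \<le> Poly_Mapping.lookup m v"
    and deg: "(\<Sum>v\<in>V. Poly_Mapping.lookup m v) = (\<Sum>v\<in>V. t v)"
  shows "m = exponent V t"
proof -
  have "(\<Sum>v\<in>V. Poly_Mapping.lookup m v - t v) = 0"
    using ge deg by (simp add: sum_subtractf_nat)
  then have "\<forall>v\<in>V. Poly_Mapping.lookup m v - t v = 0"
    using V by simp
  with ge have "\<forall>v\<in>V. Poly_Mapping.lookup m v = t v"
    by force
  then show ?thesis
    by (rule exponent_eqI[OF V supp])
qed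

lemma eq_exponent_add_single_of_ge:
  assumes V: "finite V" and supp: "\<forall>x. x \<notin> V \<longrightarrow> Poly_Mapping.lookup m x = 0"
    and ge: "\<forall>v\<in>V. t v \<le> Poly_Mapping.lookup m v"
    and deg: "(\<Sum>v\<in>V. Poly_Mapping.lookup m v) = (\<Sum>v\<in>V. t v) + 1"
  obtains z where "z \<in> V" "m = exponent V t + Poly_Mapping.single z 1"
proof -
  have excess: "(\<Sum>v\<in>V. Poly_Mapping.lookup m v - t v) = 1"
    using ge deg by (simp add: sum_subtractf_nat)
  then have "(\<Sum>v\<in>V. Poly_Mapping.lookup m v - t v) \<noteq> 0"
    by simp
  then obtain z where z: "z \<in> V" "Poly_Mapping.lookup m z - t z \<noteq> 0"
    by (rule sum.not_neutral_contains_not_neutral)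
  have "(Poly_Mapping.lookup m z - t z) + (\<Sum>v\<in>V - {z}. Poly_Mapping.lookup m v - t v) = 1"
    using excess V z(1) by (simp add: sum.remove)
  with z(2) have "Poly_Mapping.lookup m z - t z = 1"
    and "(\<Sum>v\<in>V - {z}. Poly_Mapping.lookup m v - t v) = 0"
    by linarith+
  then have "Poly_Mapping.lookup m z = t z + 1" "\<forall>v\<in>V - {z}. Poly_Mapping.lookup m v - t v = 0"
    using V by auto
  with ge have "\<forall>v\<in>V. Poly_Mapping.lookup m v = t v + (if v = z then 1 else 0)"
    by force
  then have "m = exponent V (\<lambda>v. t v + (if v = z then 1 else 0))"
    by (rule exponent_eqI[OF V supp])
  then show ?thesis
    using that z(1) V by (simp add: exponent_add_single)
qed

lemma grid_functional_eq_0: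
  assumes "finite V" "v \<in> V" "card (A v) = Suc (t v)" "Poly_Mapping.lookup m v < t v"
  shows "grid_functional V A m = 0"
  unfolding grid_functional_def
  using assms by (intro prod_zero) (auto intro!: bexI[of _ v] divdiff_power_below)

lemma grid_functional_exponent:
  assumes "finite V" "\<forall>v\<in>V. card (A v) = Suc (t v)"
  shows "grid_functional V A (exponent V t) = 1"
  unfolding grid_functional_def
  using assms by (intro prod.neutral) (simp add: lookup_exponent divdiff_power_degree)

lemma grid_functional_exponent_add_single:
  assumes V: "finite V" and A: "\<forall>v\<in>V. card (A v) = Suc (t v)" and z: "z \<in> V"
  shows "grid_functional V A (exponent V t + Poly_Mapping.single z 1) = \<Sum>(A z)"
proof -
  have "grid_functional V A (exponent V t + Poly_Mapping.single z 1)
      = (\<Prod>v\<in>V. divdiff_power (A v) (if v = z then Suc (t v) else t v))"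
    unfolding grid_functional_def using V
    by (intro prod.cong) (auto simp: lookup_add lookup_exponent lookup_single)
  also have "\<dots> = divdiff_power (A z) (Suc (t z))
      * (\<Prod>v\<in>V - {z}. divdiff_power (A v) (if v = z then Suc (t v) else t v))"
    using V z by (simp add: prod.remove)
  also have "(\<Prod>v\<in>V - {z}. divdiff_power (A v) (if v = z then Suc (t v) else t v))
      = (\<Prod>v\<in>V - {z}. divdiff_power (A v) (t v))"
    by (rule prod.cong) auto
  also have "(\<Prod>v\<in>V - {z}. divdiff_power (A v) (t v)) = 1"
    using A by (intro prod.neutral) (auto intro: divdiff_power_degree)
  also have "divdiff_power (A z) (Suc (t z)) = \<Sum>(A z)"
    using A z by (simp add: divdiff_power_Suc_degree)
  finally show ?thesis
    by simp
qed

lemma grid_functional_of_degree: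
  assumes V: "finite V" and supp: "\<forall>x. x \<notin> V \<longrightarrow> Poly_Mapping.lookup m x = 0"
    and A: "\<forall>v\<in>V. card (A v) = Suc (t v)"
    and deg: "(\<Sum>v\<in>V. Poly_Mapping.lookup m v) = (\<Sum>v\<in>V. t v)"
  shows "grid_functional V A m = (if m = exponent V t then 1 else 0)"
proof (cases "\<forall>v\<in>V. t v \<le> Poly_Mapping.lookup m v")
  case True
  then show ?thesis
    using eq_exponent_of_ge[OF V supp True deg] grid_functional_exponent[OF V A] by simp
next
  case False
  then obtain v where v: "v \<in> V" "Poly_Mapping.lookup m v < t v"
    by force
  then have "m \<noteq> exponent V t"
    using V by (auto simp: lookup_exponent)
  then show ?thesis
    using grid_functional_eq_0[of V v A t m] V v A by simp
qed

lemma grid_functional_of_degree_Suc: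
  assumes V: "finite V" and supp: "\<forall>x. x \<notin> V \<longrightarrow> Poly_Mapping.lookup m x = 0"
    and A: "\<forall>v\<in>V. card (A v) = Suc (t v)"
    and deg: "(\<Sum>v\<in>V. Poly_Mapping.lookup m v) = (\<Sum>v\<in>V. t v) + 1"
  shows "grid_functional V A m
       = (\<Sum>z\<in>V. if m = exponent V t + Poly_Mapping.single z 1 then \<Sum>(A z) else 0)"
proof (cases "\<forall>v\<in>V. t v \<le> Poly_Mapping.lookup m v")
  case True
  then obtain z where z: "z \<in> V" "m = exponent V t + Poly_Mapping.single z 1"
    using eq_exponent_add_single_of_ge[OF V supp _ deg] by blast
  have "m = exponent V t + Poly_Mapping.single z' 1 \<longleftrightarrow> z' = z" for z'
    using z(2) by (metis add_left_cancel lookup_single_eq lookup_single_not_eq one_neq_zero)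
  then show ?thesis
    using grid_functional_exponent_add_single[OF V A z(1)] z V by (simp add: sum.delta')
next
  case False
  then obtain v where v: "v \<in> V" "Poly_Mapping.lookup m v < t v"
    by force
  then have "m \<noteq> exponent V t + Poly_Mapping.single z 1" for z
    using V by (auto simp: lookup_add lookup_exponent)
  then show ?thesis
    using grid_functional_eq_0[of V v A t m] V v A by simp
qed

lemma lookup_arc_exponent_notin:
  assumes "D \<subseteq> V \<times> V" "S \<subseteq> D" "x \<notin> V"
  shows "Poly_Mapping.lookup (arc_exponent D S) x = 0"
  unfolding arc_exponent_def lookup_add lookup_sum lookup_single when_def
  using assms by (force intro!: sum.neutral)

lemma sum_lookup_sum_single:
  assumes "finite V" "finite S" "h ` S \<subseteq> V"
  shows "(\<Sum>v\<in>V. Poly_Mapping.lookup (\<Sum>p\<in>S. Poly_Mapping.single (h p) (1::nat)) v) = card S"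
proof -
  have "(\<Sum>v\<in>V. Poly_Mapping.lookup (\<Sum>p\<in>S. Poly_Mapping.single (h p) (1::nat)) v)
      = (\<Sum>p\<in>S. \<Sum>v\<in>V. if h p = v then 1 else 0)"
    unfolding lookup_sum lookup_single when_def by (rule sum.swap)
  also have "\<dots> = (\<Sum>p\<in>S. 1)"
    using assms by (intro sum.cong) (auto simp: sum.delta)
  finally show ?thesis
    by simp
qed

lemma sum_lookup_arc_exponent:
  assumes V: "finite V" and D: "D \<subseteq> V \<times> V" and S: "S \<subseteq> D"
  shows "(\<Sum>v\<in>V. Poly_Mapping.lookup (arc_exponent D S) v) = card D"
proof -
  have "finite D"
    using V D finite_subset by blast
  then have fin: "finite S" "finite (D - S)"
    using S finite_subset by auto
  have "(\<Sum>v\<in>V. Poly_Mapping.lookup (arc_exponent D S) v) = card S + card (D - S)"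
    unfolding arc_exponent_def lookup_add sum.distrib
    using sum_lookup_sum_single[OF V fin(1), of snd] sum_lookup_sum_single[OF V fin(2), of fst] D S
    by force
  also have "\<dots> = card D"
    using S fin by (metis card_Un_disjoint Diff_disjoint Un_Diff_cancel Un_absorb1)
  finally show ?thesis .
qed

lemma coeff_graph_poly_eq_0:
  fixes A :: "'v \<Rightarrow> 'a::field_char_0 set"
  assumes V: "finite V" and D: "D \<subseteq> V \<times> V" and A: "\<forall>v\<in>V. card (A v) = Suc (t v)"
    and deg: "(\<Sum>v\<in>V. t v) = card D"
    and no_coloring: "\<forall>a\<in>PiE V A. \<exists>p\<in>D. a (fst p) = a (snd p)"
  shows "Poly_Mapping.lookup (graph_poly D) (exponent V t) = 0"
proof -
  have fin_D: "finite D"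
    using V D finite_subset by blast
  have "grid_functional V A (arc_exponent D S) = (if arc_exponent D S = exponent V t then 1 else 0)"
    if "S \<in> Pow D" for S
    using that V D A deg lookup_arc_exponent_notin sum_lookup_arc_exponent
    by (intro grid_functional_of_degree) auto
  then have "(of_int (Poly_Mapping.lookup (graph_poly D) (exponent V t)) :: 'a)
      = (\<Sum>S\<in>Pow D. (-1) ^ card (D - S) * grid_functional V A (arc_exponent D S))"
    unfolding lookup_graph_poly[OF fin_D] of_int_sum by (intro sum.cong) auto
  also have "\<dots> = 0"
    using A by (intro grid_functional_graph_poly_eq_0[OF V D _ no_coloring]) (auto intro: card_ge_0_finite)
  finally show ?thesis
    by simp
qed

lemma coeff_graph_poly_weighted_sum_eq_0:
  fixes A :: "'v \<Rightarrow> 'a::field set"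
  assumes V: "finite V" and D: "D \<subseteq> V \<times> V" and A: "\<forall>v\<in>V. card (A v) = Suc (t v)"
    and deg: "(\<Sum>v\<in>V. t v) + 1 = card D"
    and no_coloring: "\<forall>a\<in>PiE V A. \<exists>p\<in>D. a (fst p) = a (snd p)"
  shows "(\<Sum>z\<in>V. of_int (Poly_Mapping.lookup (graph_poly D) (exponent V t + Poly_Mapping.single z 1))
           * \<Sum>(A z)) = 0"
proof -
  define e where "e z = exponent V t + Poly_Mapping.single z 1" for z
  have fin_D: "finite D"
    using V D finite_subset by blast
  have grid: "grid_functional V A (arc_exponent D S) = (\<Sum>z\<in>V. if arc_exponent D S = e z then \<Sum>(A z) else 0)"
    if "S \<in> Pow D" for S
    unfolding e_def using that V D A deg lookup_arc_exponent_notin sum_lookup_arc_exponent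
    by (intro grid_functional_of_degree_Suc) auto
  have "(\<Sum>z\<in>V. of_int (Poly_Mapping.lookup (graph_poly D) (e z)) * \<Sum>(A z))
      = (\<Sum>z\<in>V. \<Sum>S\<in>Pow D. (if arc_exponent D S = e z then (-1) ^ card (D - S) else 0) * \<Sum>(A z))"
    unfolding lookup_graph_poly[OF fin_D] of_int_sum sum_distrib_right by (intro sum.cong refl) simp
  also have "\<dots> = (\<Sum>S\<in>Pow D. (-1) ^ card (D - S) * grid_functional V A (arc_exponent D S))"
  proof (subst sum.swap, rule sum.cong[OF refl])
    fix S assume "S \<in> Pow D"
    show "(\<Sum>z\<in>V. (if arc_exponent D S = e z then (-1) ^ card (D - S) else 0) * \<Sum>(A z))
        = (-1) ^ card (D - S) * grid_functional V A (arc_exponent D S)"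
      unfolding grid[OF \<open>S \<in> Pow D\<close>] sum_distrib_left[where A = V] by (intro sum.cong refl) simp
  qed
  also have "\<dots> = 0"
    using A by (intro grid_functional_graph_poly_eq_0[OF V D _ no_coloring]) (auto intro: card_ge_0_finite)
  finally show ?thesis
    unfolding e_def .
qed

section \<open>Orientations and list colourings\<close>

lemma orientation_arc_edge:
  assumes "orientation E D" "p \<in> D"
  shows "{fst p, snd p} \<in> E"
proof -
  have "\<forall>(u, v)\<in>D. {u, v} \<in> E"
    using assms(1) unfolding orientation_def by (rule conjunct1)
  then show ?thesis
    using assms(2) by (cases p) auto
qed

lemma orientation_edge_arc:
  assumes "orientation E D" "e \<in> E"
  obtains p where "p \<in> D" "{fst p, snd p} = e"
    "\<And>q. q \<in> D \<Longrightarrow> {fst q, snd q} = e \<Longrightarrow> q = p"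
proof -
  have "\<forall>e\<in>E. \<exists>!p. p \<in> D \<and> {fst p, snd p} = e"
    using assms(1) unfolding orientation_def by (rule conjunct2)
  then have "\<exists>!p. p \<in> D \<and> {fst p, snd p} = e"
    using assms(2) by (rule bspec)
  then obtain p where "p \<in> D \<and> {fst p, snd p} = e" "\<forall>q. q \<in> D \<and> {fst q, snd q} = e \<longrightarrow> q = p"
    by (rule ex1E)
  then show ?thesis
    by (intro that) auto
qed

lemma orientation_subset:
  assumes "simple_graph V E" "orientation E D"
  shows "D \<subseteq> V \<times> V"
proof
  fix p assume "p \<in> D"
  then have "{fst p, snd p} \<in> E"
    using assms(2) by (intro orientation_arc_edge)
  then show "p \<in> V \<times> V"
    using assms(1) unfolding simple_graph_def by (cases p) auto
qed

lemma card_orientation: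
  assumes O: "orientation E D"
  shows "card D = card E"
proof -
  have inj: "inj_on (\<lambda>p. {fst p, snd p}) D"
  proof (rule inj_onI)
    fix p q assume pq: "p \<in> D" "q \<in> D" "{fst p, snd p} = {fst q, snd q}"
    obtain r where r: "\<And>q. q \<in> D \<Longrightarrow> {fst q, snd q} = {fst p, snd p} \<Longrightarrow> q = r"
      using orientation_edge_arc[OF O orientation_arc_edge[OF O pq(1)]] by blast
    have "p = r" "q = r"
      using r[OF pq(1) refl] r[OF pq(2) pq(3)[symmetric]] .
    then show "p = q"
      by simp
  qed
  have "(\<lambda>p. {fst p, snd p}) ` D = E"
  proof
    show "(\<lambda>p. {fst p, snd p}) ` D \<subseteq> E"
      using orientation_arc_edge[OF O] by blast
    show "E \<subseteq> (\<lambda>p. {fst p, snd p}) ` D"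
    proof
      fix e assume "e \<in> E"
      then obtain p where "p \<in> D" "{fst p, snd p} = e"
        by (rule orientation_edge_arc[OF O])
      then show "e \<in> (\<lambda>p. {fst p, snd p}) ` D"
        by blast
    qed
  qed
  with card_image[OF inj] show ?thesis
    by simp
qed

lemma no_coloring_from_sublists:
  assumes O: "orientation E D" and not_colorable: "\<not> L_colorable V E L"
    and A: "\<forall>v\<in>V. A v \<subseteq> L v"
  shows "\<forall>a\<in>PiE V A. \<exists>p\<in>D. a (fst p) = a (snd p)"
proof
  fix a assume "a \<in> PiE V A"
  then have "\<forall>v\<in>V. a v \<in> L v"
    using A by (auto simp: PiE_iff)
  then obtain u w where uw: "{u, w} \<in> E" "a u = a w"
    using not_colorable unfolding L_colorable_def by blast
  obtain p where "p \<in> D" "{fst p, snd p} = {u, w}"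
    by (rule orientation_edge_arc[OF O uw(1)])
  moreover from this(2) have "a (fst p) = a (snd p)"
    using uw(2) by (auto simp: doubleton_eq_iff)
  ultimately show "\<exists>p\<in>D. a (fst p) = a (snd p)"
    by blast
qed

lemma L_colorable_image:
  assumes h: "bij h" and "L_colorable V E (\<lambda>v. h ` L v)"
  shows "L_colorable V E L"
proof -
  obtain \<phi> where \<phi>: "\<forall>v\<in>V. \<phi> v \<in> h ` L v" "\<forall>u v. {u, v} \<in> E \<longrightarrow> \<phi> u \<noteq> \<phi> v"
    using assms(2) unfolding L_colorable_def by blast
  have "\<forall>v\<in>V. inv h (\<phi> v) \<in> L v"
    using \<phi>(1) bij_is_inj[OF h] by auto
  moreover have "\<forall>u v. {u, v} \<in> E \<longrightarrow> inv h (\<phi> u) \<noteq> inv h (\<phi> v)"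
    using \<phi>(2) by (metis h bij_inv_eq_iff)
  ultimately show ?thesis
    unfolding L_colorable_def by (intro exI[of _ "\<lambda>v. inv h (\<phi> v)"]) simp
qed

lemma sum_transpose_image:
  fixes X :: "'a::ab_group_add set"
  assumes "finite X" "c' \<notin> X"
  shows "\<Sum>(transpose c c' ` X) = \<Sum>X + (if c \<in> X then c' - c else 0)"
proof -
  have "\<Sum>(transpose c c' ` X) = (\<Sum>x\<in>X. transpose c c' x)"
    using inj_on_subset[OF bij_is_inj[OF bij_transpose] subset_UNIV] by (simp add: sum.reindex)
  also have "\<dots> = (\<Sum>x\<in>X. x + (if x = c then c' - c else 0))"
    using assms(2) by (intro sum.cong) (auto simp: transpose_def)
  also have "\<dots> = \<Sum>X + (if c \<in> X then c' - c else 0)"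
    using assms(1) by (simp add: sum.distrib sum.delta)
  finally show ?thesis .
qed

lemma obtain_sublists:
  assumes "\<forall>v\<in>V. t v < card (L v)"
  obtains A where "\<forall>v\<in>V. A v \<subseteq> L v" "\<forall>v\<in>V. card (A v) = Suc (t v)"
    "\<forall>v\<in>V. c \<in> A v \<longleftrightarrow> c \<in> L v"
proof -
  have "\<exists>B. B \<subseteq> L v \<and> card B = Suc (t v) \<and> (c \<in> B \<longleftrightarrow> c \<in> L v)" if v: "v \<in> V" for v
  proof (cases "c \<in> L v")
    case True
    have fin: "finite (L v)"
      using assms v by (metis card.infinite not_less_zero)
    moreover have "t v < card (L v)"
      using assms v by blast
    ultimately have "t v \<le> card (L v - {c})"
      using True by simp
    then obtain T where "T \<subseteq> L v - {c}" "card T = t v"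
      by (rule obtain_subset_with_card_n)
    moreover have "finite T" "c \<notin> T"
      using calculation(1) fin finite_subset by auto
    ultimately show ?thesis
      using True by (intro exI[of _ "insert c T"]) auto
  next
    case False
    obtain T where "T \<subseteq> L v" "card T = Suc (t v)"
      using assms v by (meson Suc_leI obtain_subset_with_card_n)
    then show ?thesis
      using False by blast
  qed
  then obtain A where "\<forall>v\<in>V. A v \<subseteq> L v \<and> card (A v) = Suc (t v) \<and> (c \<in> A v \<longleftrightarrow> c \<in> L v)"
    by (metis bchoice)
  then show ?thesis
    using that by blast
qed

lemma coeff_mono_graph_poly_eq_0:
  fixes L :: "'v \<Rightarrow> 'a::field_char_0 set"
  assumes G: "simple_graph V E" and O: "orientation E D"
    and g: "\<forall>v\<in>V. g v < int (card (L v))" and deg: "(\<Sum>v\<in>V. g v) = int (card E)"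
    and not_colorable: "\<not> L_colorable V E L"
  shows "coeff_mono V g (graph_poly D) = 0"
proof (cases "\<forall>v\<in>V. 0 \<le> g v")
  case False
  then show ?thesis
    unfolding coeff_mono_def by auto
next
  case True
  define t where "t v = nat (g v)" for v
  have V: "finite V"
    using G unfolding simple_graph_def by simp
  have t_less: "\<forall>v\<in>V. t v < card (L v)"
    using True g unfolding t_def by (auto simp: nat_less_iff)
  obtain A where A: "\<forall>v\<in>V. A v \<subseteq> L v" "\<forall>v\<in>V. card (A v) = Suc (t v)"
    by (rule obtain_sublists[OF t_less]) simp
  have "int (\<Sum>v\<in>V. t v) = (\<Sum>v\<in>V. g v)"
    using True unfolding t_def of_nat_sum by (intro sum.cong) auto
  also have "\<dots> = int (card D)"
    using deg card_orientation[OF O] by simp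
  finally have "(\<Sum>v\<in>V. t v) = card D"
    by (simp only: of_nat_eq_iff)
  then have "Poly_Mapping.lookup (graph_poly D) (exponent V t) = 0"
    using coeff_graph_poly_eq_0[OF V orientation_subset[OF G O] A(2)]
      no_coloring_from_sublists[OF O not_colorable A(1)] by simp
  then show ?thesis
    using True by (simp add: coeff_mono_eq_lookup_exponent t_def[abs_def])
qed

lemma graph_poly_weighted_sum_eq_0:
  fixes L :: "'v \<Rightarrow> 'a::field set"
  assumes G: "simple_graph V E" and O: "orientation E D"
    and not_colorable: "\<not> L_colorable V E L"
    and A: "\<forall>v\<in>V. A v \<subseteq> L v" "\<forall>v\<in>V. card (A v) = Suc (t v)"
    and deg: "(\<Sum>v\<in>V. t v) + 1 = card E"
  shows "(\<Sum>z\<in>V. of_int (Poly_Mapping.lookup (graph_poly D) (exponent V t + Poly_Mapping.single z 1))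
           * \<Sum>(A z)) = 0"
proof (rule coeff_graph_poly_weighted_sum_eq_0)
  show "finite V"
    using G unfolding simple_graph_def by simp
  show "D \<subseteq> V \<times> V"
    using G O by (rule orientation_subset)
  show "(\<Sum>v\<in>V. t v) + 1 = card D"
    using deg card_orientation[OF O] by simp
  show "\<forall>a\<in>PiE V A. \<exists>p\<in>D. a (fst p) = a (snd p)"
    using O not_colorable A(1) by (rule no_coloring_from_sublists)
qed (use A(2) in simp)

lemma sum_shifted_coeffs_chi_eq_0:
  fixes L :: "'v \<Rightarrow> 'a::field_char_0 set"
  assumes G: "simple_graph V E" and O: "orientation E D"
    and f_nonneg: "\<forall>v\<in>V. 0 \<le> f v" and f_less: "\<forall>v\<in>V. f v < int (card (L v))"
    and deg: "(\<Sum>v\<in>V. f v) + 1 = int (card E)"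
    and not_colorable: "\<not> L_colorable V E L"
  shows "(\<Sum>z\<in>V. coeff_mono V (\<lambda>u. f u + indic1 z u) (graph_poly D) * chi L c z) = 0"
proof -
  define t where "t v = nat (f v)" for v
  define k where "k z = Poly_Mapping.lookup (graph_poly D) (exponent V t + Poly_Mapping.single z 1)" for z
  have V: "finite V"
    using G unfolding simple_graph_def by simp
  have coeff: "coeff_mono V (\<lambda>u. f u + indic1 z u) (graph_poly D) = k z" if z: "z \<in> V" for z
  proof -
    have "exponent V (\<lambda>v. nat (f v + indic1 z v)) = exponent V (\<lambda>v. t v + (if v = z then 1 else 0))"
      unfolding exponent_def t_def indic1_def using f_nonneg by (intro sum.cong) (auto simp: nat_add_distrib)
    moreover have "\<forall>v\<in>V. 0 \<le> f v + indic1 z v"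
      using f_nonneg by (simp add: indic1_def)
    ultimately show ?thesis
      unfolding k_def using V z by (simp add: coeff_mono_eq_lookup_exponent exponent_add_single)
  qed
  have "int ((\<Sum>v\<in>V. t v) + 1) = (\<Sum>v\<in>V. f v) + 1"
    using f_nonneg unfolding t_def by (simp add: of_nat_sum)
  then have deg_t: "(\<Sum>v\<in>V. t v) + 1 = card E"
    using deg by linarith
  have t_less: "\<forall>v\<in>V. t v < card (L v)"
    using f_nonneg f_less unfolding t_def by (auto simp: nat_less_iff)
  obtain A where A_sub: "\<forall>v\<in>V. A v \<subseteq> L v" and A_card: "\<forall>v\<in>V. card (A v) = Suc (t v)"
    and A_c: "\<forall>v\<in>V. c \<in> A v \<longleftrightarrow> c \<in> L v"
    by (rule obtain_sublists[OF t_less])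
  have "finite (\<Union>v\<in>V. L v)"
    using V t_less by (metis card.infinite finite_UN not_less_zero)
  then obtain c' where c': "c' \<notin> insert c (\<Union>v\<in>V. L v)"
    by (metis ex_new_if_finite finite_insert infinite_UNIV_char_0)
  define A' where "A' v = transpose c c' ` A v" for v
  have A'_sub: "\<forall>v\<in>V. A' v \<subseteq> transpose c c' ` L v"
    using A_sub unfolding A'_def by blast
  have A'_card: "\<forall>v\<in>V. card (A' v) = Suc (t v)"
    using A_card unfolding A'_def by (simp add: card_image bij_is_inj inj_on_subset)
  have sum_A': "\<Sum>(A' v) = \<Sum>(A v) + (c' - c) * of_int (chi L c v)" if v: "v \<in> V" for v
  proof -
    have "finite (A v)" "c' \<notin> A v"
      using A_card A_sub c' v by (auto intro: card_ge_0_finite)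
    then show ?thesis
      using A_c v unfolding A'_def chi_def by (simp add: sum_transpose_image)
  qed
  have not_colorable': "\<not> L_colorable V E (\<lambda>v. transpose c c' ` L v)"
    using L_colorable_image[of "transpose c c'" V E L] not_colorable by auto
  have "(c' - c) * (\<Sum>z\<in>V. of_int (k z) * of_int (chi L c z))
      = (\<Sum>z\<in>V. of_int (k z) * \<Sum>(A' z)) - (\<Sum>z\<in>V. of_int (k z) * \<Sum>(A z))"
    by (simp add: sum_distrib_left sum_subtractf[symmetric] sum_A' algebra_simps cong: sum.cong)
  also have "\<dots> = 0"
    using graph_poly_weighted_sum_eq_0[OF G O not_colorable' A'_sub A'_card deg_t]
      graph_poly_weighted_sum_eq_0[OF G O not_colorable A_sub A_card deg_t]
    unfolding k_def by simp
  finally have "(\<Sum>z\<in>V. of_int (k z) * of_int (chi L c z) :: 'a) = 0"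
    using c' by simp
  then have "(of_int (\<Sum>z\<in>V. k z * chi L c z) :: 'a) = 0"
    by (simp only: of_int_sum of_int_mult)
  then have "(\<Sum>z\<in>V. k z * chi L c z) = 0"
    by (simp only: of_int_eq_0_iff)
  then show ?thesis
    using coeff by simp
qed

lemma coeff_mono_shift_eq_0_of_negative:
  fixes L :: "'v \<Rightarrow> 'a::field_char_0 set"
  assumes G: "simple_graph V E" and O: "orientation E D"
    and L_fin: "\<forall>v\<in>V. finite (L v)" and f_less: "\<forall>v\<in>V. f v < int (card (L v))"
    and deg: "(\<Sum>v\<in>V. f v) + 1 = int (card E)"
    and not_colorable: "\<not> L_colorable V E L"
    and neg: "v0 \<in> V" "f v0 < 0" and z: "z \<in> V" "L z \<noteq> {}"
  shows "coeff_mono V (\<lambda>u. f u + indic1 z u) (graph_poly D) = 0"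
proof (cases "\<forall>v\<in>V. 0 \<le> f v + indic1 z v")
  case False
  then show ?thesis
    unfolding coeff_mono_def by auto
next
  case True
  \<comment> \<open>The shift by 1 at z can only repair a negative value at z itself, so f z = -1.\<close>
  have "0 \<le> f v0 + indic1 z v0"
    using True neg(1) by blast
  then have "v0 = z"
    using neg(2) unfolding indic1_def by (cases "v0 = z") simp_all
  then have "f z + indic1 z z = 0"
    using True neg by (force simp: indic1_def)
  moreover have "0 < card (L z)"
    using L_fin z by (simp add: card_gt_0_iff)
  ultimately have less: "\<forall>v\<in>V. f v + indic1 z v < int (card (L v))"
    using f_less by (auto simp: indic1_def)
  have "V \<noteq> {}" "finite V"
    using G z unfolding simple_graph_def by auto
  then have "(\<Sum>v\<in>V. f v + indic1 z v) = int (card E)"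
    using deg z by (simp add: sum.distrib indic1_def)
  then show ?thesis
    by (rule coeff_mono_graph_poly_eq_0[OF G O less _ not_colorable])
qed

theorem theorem5:
  fixes V :: "'v set" and E :: "'v set set" and D :: "('v \<times> 'v) set"
    and L :: "'v \<Rightarrow> real set" and f :: "'v \<Rightarrow> int"
  assumes "simple_graph V E"
    and "orientation E D"
    and "\<forall>v\<in>V. finite (L v)"
    and "\<forall>v\<in>V. f v < int (card (L v))"
    and "(\<Sum>v\<in>V. f v) = int (card E) - 1"
    and "\<not> L_colorable V E L"
  shows "\<forall>c::real. (\<Sum>z\<in>V. coeff_mono V (\<lambda>u. f u + indic1 z u) (graph_poly D) * chi L c z) = 0"
proof
  fix c :: real
  have deg: "(\<Sum>v\<in>V. f v) + 1 = int (card E)"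
    using assms(5) by simp
  show "(\<Sum>z\<in>V. coeff_mono V (\<lambda>u. f u + indic1 z u) (graph_poly D) * chi L c z) = 0"
  proof (cases "\<forall>v\<in>V. 0 \<le> f v")
    case True
    then show ?thesis
      using sum_shifted_coeffs_chi_eq_0[OF assms(1,2) _ assms(4) deg assms(6)] by blast
  next
    case False
    then obtain v0 where v0: "v0 \<in> V" "f v0 < 0"
      by (auto simp: not_le)
    have "coeff_mono V (\<lambda>u. f u + indic1 z u) (graph_poly D) * chi L c z = 0" if "z \<in> V" for z
      using coeff_mono_shift_eq_0_of_negative[OF assms(1-4) deg assms(6) v0 that]
      by (cases "c \<in> L z") (auto simp: chi_def)
    then show ?thesis
      by (rule sum.neutral[OF ballI])
  qed
qed

end
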